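(* Let $X$ be any Banach space and let $Y$ be a Banach space whose unit ball has a strongly exposed point $y_0\in S_Y$. Let $E=X\oplus_1Y$. Then for every $\varepsilon>0$ there is a convex combination of slices of $B_E$ containing $0$ and of diameter at most $4\varepsilon$ (i.e., there are ccs of $B_E$ around $0$ of arbitrarily small diameter). In particular, $E$ contains no ccs Daugavet point and fails the strong diameter 2 property.
   Context: $X\oplus_1Y$ is $X\times Y$ with norm $\|(x,y)\|=\|x\|+\|y\|$. A point $y_0\in B_Y$ is strongly exposed if there is $y_0^*\in S_{Y^*}$ with $\operatorname{Re}y_0^*(y_0)=1$ such that $\|y_n-y_0\|\to0$ whenever $y_n\in B_Y$ and $\operatorname{Re}y_0^*(y_n)\to1$. A slice of $B_E$ is a non-empty set $\{u\in B_E:\operatorname{Re}f(u)>\|f\|-\delta\}$ with $f\in E^*$, $\delta>0$; a ccs of $B_E$ is $\sum_{i=1}^n\lambda_iS_i$ with $\lambda_i\in(0,1]$, $\sum\lambda_i=1$, $S_i$ slices. $u\in S_E$ is a ccs Daugavet point if $\sup_{v\in C}\|u-v\|=2$ for every ccs $C$ of $B_E$. The strong diameter 2 property means every ccs of the unit ball has diameter $2$. *)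

theory Defs
  imports "HOL-Analysis.Analysis"
begin

text \<open>The l1-sum X (+)_1 Y is modelled on the product type with the explicit norm below
  (the library norm on products is the l2 one, so we do not use it).\<close>

definition norm1 :: "('a::real_normed_vector \<times> 'b::real_normed_vector) \<Rightarrow> real" where
  "norm1 u = norm (fst u) + norm (snd u)"

definition ball1 :: "('a::real_normed_vector \<times> 'b::real_normed_vector) set" where
  "ball1 = {u. norm1 u \<le> 1}"

definition dnorm1 :: "('a::real_normed_vector \<times> 'b::real_normed_vector \<Rightarrow> real) \<Rightarrow> real" where
  "dnorm1 f = (SUP u\<in>ball1. \<bar>f u\<bar>)"

definition is_slice1 :: "('a::real_normed_vector \<times> 'b::real_normed_vector) set \<Rightarrow> bool" where
  "is_slice1 S \<longleftrightarrow> (\<exists>f \<delta>. bounded_linear f \<and> \<delta> > 0 \<and>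
       S = {u\<in>ball1. f u > dnorm1 f - \<delta>} \<and> S \<noteq> {})"

definition is_ccs1 :: "('a::real_normed_vector \<times> 'b::real_normed_vector) set \<Rightarrow> bool" where
  "is_ccs1 C \<longleftrightarrow> (\<exists>n::nat. \<exists>lam S. n \<ge> 1 \<and> (\<forall>i<n. 0 < lam i \<and> lam i \<le> 1 \<and> is_slice1 (S i))
       \<and> (\<Sum>i<n. lam i) = 1
       \<and> C = {(\<Sum>i<n. lam i *\<^sub>R v i) | v. \<forall>i<n. v i \<in> S i})"

definition ccs_daugavet_point1 :: "('a::real_normed_vector \<times> 'b::real_normed_vector) \<Rightarrow> bool" where
  "ccs_daugavet_point1 u \<longleftrightarrow> norm1 u = 1 \<and>
     (\<forall>C. is_ccs1 C \<longrightarrow> (SUP v\<in>C. norm1 (u - v)) = 2)"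

definition diam1 :: "('a::real_normed_vector \<times> 'b::real_normed_vector) set \<Rightarrow> real" where
  "diam1 C = (SUP p\<in>C \<times> C. norm1 (fst p - snd p))"

definition SD2P1 :: "('a::real_normed_vector \<times> 'b::real_normed_vector) itself \<Rightarrow> bool" where
  "SD2P1 _ \<longleftrightarrow> (\<forall>C::('a \<times> 'b) set. is_ccs1 C \<longrightarrow> diam1 C = 2)"

definition strongly_exposed :: "'b::real_normed_vector \<Rightarrow> bool" where
  "strongly_exposed y0 \<longleftrightarrow> norm y0 \<le> 1 \<and>
     (\<exists>g::'b \<Rightarrow> real. bounded_linear g \<and> onorm g = 1 \<and> g y0 = 1 \<and>
        (\<forall>y::nat \<Rightarrow> 'b. (\<forall>n. norm (y n) \<le> 1) \<longrightarrow> (\<lambda>n. g (y n)) \<longlonglongrightarrow> 1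
            \<longrightarrow> (\<lambda>n. norm (y n - y0)) \<longlonglongrightarrow> 0))"

end

theory Submission
  imports Defs
begin

text \<open>Let g strongly expose y0. The two slices of the unit ball cut out by g(snd u) > 1 - \<delta>
  and -g(snd u) > 1 - \<delta> consist of points close to (0, y0) and to (0, -y0) respectively:
  the first coordinate is small because the l1-norm leaves almost nothing for it, and the
  second one is close to \<plusminus>y0 by strong exposedness. Hence the midpoint combination of these
  two slices is a ccs containing 0 of small diameter, which rules out ccs Daugavet points
  and the strong diameter 2 property.\<close>

lemma abs_le_norm_if_onorm_eq_1:
  fixes g :: "'b::real_normed_vector \<Rightarrow> real"
  assumes "bounded_linear g" and "onorm g = 1"
  shows "\<bar>g y\<bar> \<le> norm y"
  using onorm[OF assms(1), of y] assms(2) by simp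

lemma strongly_exposed_uniform:
  fixes y0 :: "'b::real_normed_vector"
  assumes "strongly_exposed y0"
  obtains g :: "'b \<Rightarrow> real" where "bounded_linear g" "onorm g = 1" "g y0 = 1" "norm y0 \<le> 1"
    "\<And>e. e > 0 \<Longrightarrow> \<exists>d>0. \<forall>y. norm y \<le> 1 \<longrightarrow> g y > 1 - d \<longrightarrow> norm (y - y0) < e"
proof -
  obtain g :: "'b \<Rightarrow> real" where bl: "bounded_linear g" and og: "onorm g = 1" and gy: "g y0 = 1"
    and ny: "norm y0 \<le> 1"
    and seq: "\<And>y::nat \<Rightarrow> 'b. (\<forall>n. norm (y n) \<le> 1) \<Longrightarrow> (\<lambda>n. g (y n)) \<longlonglongrightarrow> 1
                \<Longrightarrow> (\<lambda>n. norm (y n - y0)) \<longlonglongrightarrow> 0"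
    using assms unfolding strongly_exposed_def by blast
  have "\<exists>d>0. \<forall>y. norm y \<le> 1 \<longrightarrow> g y > 1 - d \<longrightarrow> norm (y - y0) < e" if e: "e > 0" for e
  proof (rule ccontr)
    assume "\<not> ?thesis"
    then have "\<forall>n. \<exists>y. norm y \<le> 1 \<and> g y > 1 - inverse (real (Suc n)) \<and> norm (y - y0) \<ge> e"
      by (metis inverse_positive_iff_positive not_less of_nat_0_less_iff zero_less_Suc)
    then obtain y where y: "\<And>n. norm (y n) \<le> 1" "\<And>n. g (y n) > 1 - inverse (real (Suc n))"
        "\<And>n. norm (y n - y0) \<ge> e" by metis
    have upper: "g (y n) \<le> 1" for n
      using abs_le_norm_if_onorm_eq_1[OF bl og, of "y n"] y(1)[of n] by simp
    have lower: "(\<lambda>n. 1 - inverse (real (Suc n))) \<longlonglongrightarrow> 1"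
      using tendsto_diff[OF tendsto_const LIMSEQ_inverse_real_of_nat, of 1] by simp
    have "(\<lambda>n. g (y n)) \<longlonglongrightarrow> 1"
      by (rule tendsto_sandwich[OF _ _ lower tendsto_const])
        (use y(2) upper less_imp_le in \<open>auto intro!: always_eventually\<close>)
    then have "(\<lambda>n. norm (y n - y0)) \<longlonglongrightarrow> 0" using seq y(1) by blast
    then have "eventually (\<lambda>n. norm (y n - y0) < e) sequentially" using e by (rule order_tendstoD)
    then obtain n where "norm (y n - y0) < e" by (auto simp: eventually_sequentially)
    with y(3)[of n] show False by simp
  qed
  with bl og gy ny show thesis by (rule that)
qed

lemma norm1_diff_le: "norm1 (u - v) \<le> norm1 u + norm1 v"
  unfolding norm1_def using norm_triangle_ineq4[of "fst u" "fst v"] norm_triangle_ineq4[of "snd u" "snd v"]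
  by simp

lemma norm1_diff_le_if_radius:
  assumes "\<And>w. w \<in> C \<Longrightarrow> norm1 w \<le> r" and "u \<in> C" and "v \<in> C"
  shows "norm1 (u - v) \<le> 2 * r"
  using norm1_diff_le[of u v] assms(1)[OF assms(2)] assms(1)[OF assms(3)] by linarith

lemma norm1_midpoint_le:
  fixes a b :: "'a::real_normed_vector \<times> 'b::real_normed_vector"
  shows "norm1 ((1/2) *\<^sub>R a + (1/2) *\<^sub>R b) \<le>
    (norm (fst a) + norm (fst b))/2 + (norm (snd a - y) + norm (snd b + y))/2"
proof -
  have "norm ((1/2) *\<^sub>R fst a + (1/2) *\<^sub>R fst b) \<le> (norm (fst a) + norm (fst b))/2"
    using norm_triangle_ineq[of "(1/2) *\<^sub>R fst a" "(1/2) *\<^sub>R fst b"] by simp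
  moreover have "(1/2) *\<^sub>R snd a + (1/2) *\<^sub>R snd b = (1/2::real) *\<^sub>R ((snd a - y) + (snd b + y))"
    by (simp add: algebra_simps)
  then have "norm ((1/2) *\<^sub>R snd a + (1/2) *\<^sub>R snd b) \<le> (norm (snd a - y) + norm (snd b + y))/2"
    using norm_triangle_ineq[of "snd a - y" "snd b + y"] by simp
  ultimately show ?thesis unfolding norm1_def by (simp add: field_simps)
qed

lemma dnorm1_uminus: "dnorm1 (\<lambda>u. - f u) = dnorm1 f"
  by (simp add: dnorm1_def)

lemma dnorm1_comp_snd:
  fixes g :: "'b::real_normed_vector \<Rightarrow> real"
  assumes "bounded_linear g" and "onorm g = 1" and "g y0 = 1" and "norm y0 \<le> 1"
  shows "dnorm1 (\<lambda>u::'a::real_normed_vector \<times> 'b. g (snd u)) = 1"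
  unfolding dnorm1_def
proof (rule cSup_eq_maximum)
  show "1 \<in> (\<lambda>u::'a \<times> 'b. \<bar>g (snd u)\<bar>) ` ball1"
    using assms(3,4) by (intro image_eqI[of _ _ "(0, y0)"]) (auto simp: ball1_def norm1_def)
next
  fix x assume "x \<in> (\<lambda>u::'a \<times> 'b. \<bar>g (snd u)\<bar>) ` ball1"
  then obtain u :: "'a \<times> 'b" where "norm (fst u) + norm (snd u) \<le> 1" "x = \<bar>g (snd u)\<bar>"
    by (auto simp: ball1_def norm1_def)
  then show "x \<le> 1"
    using abs_le_norm_if_onorm_eq_1[OF assms(1,2), of "snd u"] norm_ge_zero[of "fst u"] by linarith
qed

lemma is_ccs1_midpoints:
  assumes "is_slice1 S" and "is_slice1 T"
  shows "is_ccs1 {(1/2::real) *\<^sub>R a + (1/2) *\<^sub>R b | a b. a \<in> S \<and> b \<in> T}"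
  unfolding is_ccs1_def
proof (intro exI conjI)
  let ?S = "\<lambda>i::nat. if i = 0 then S else T"
  show "\<forall>i<2. 0 < (1/2::real) \<and> (1/2::real) \<le> 1 \<and> is_slice1 (?S i)"
    using assms by simp
  show "{(1/2::real) *\<^sub>R a + (1/2) *\<^sub>R b | a b. a \<in> S \<and> b \<in> T} =
        {(\<Sum>i<2. (1/2::real) *\<^sub>R v i) | v. \<forall>i<2. v i \<in> ?S i}"
  proof (intro set_eqI iffI)
    fix w assume "w \<in> {(1/2::real) *\<^sub>R a + (1/2) *\<^sub>R b | a b. a \<in> S \<and> b \<in> T}"
    then obtain a b where "a \<in> S" "b \<in> T" "w = (1/2::real) *\<^sub>R a + (1/2) *\<^sub>R b" by blast
    then show "w \<in> {(\<Sum>i<2. (1/2::real) *\<^sub>R v i) | v. \<forall>i<2. v i \<in> ?S i}"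
      by (intro CollectI exI[of _ "\<lambda>i. if i = 0 then a else b"])
        (simp add: numeral_2_eq_2 less_Suc_eq)
  next
    fix w assume "w \<in> {(\<Sum>i<2. (1/2::real) *\<^sub>R v i) | v. \<forall>i<2. v i \<in> ?S i}"
    then obtain v where v: "\<forall>i<2. v i \<in> ?S i" "w = (\<Sum>i<2. (1/2::real) *\<^sub>R v i)" by blast
    have "v 0 \<in> S" "v 1 \<in> T" using v(1)[rule_format, of 0] v(1)[rule_format, of 1] by simp_all
    moreover have "w = (1/2::real) *\<^sub>R v 0 + (1/2) *\<^sub>R v 1"
      by (simp add: v(2) numeral_2_eq_2)
    ultimately show "w \<in> {(1/2::real) *\<^sub>R a + (1/2) *\<^sub>R b | a b. a \<in> S \<and> b \<in> T}"
      by blast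
  qed
qed simp_all

lemma is_slice1_comp_snd:
  fixes g :: "'b::real_normed_vector \<Rightarrow> real"
  assumes "bounded_linear g" and "onorm g = 1" and "g y0 = 1" and "norm y0 \<le> 1" and "\<delta> > 0"
  shows "is_slice1 {u::'a::real_normed_vector \<times> 'b. u \<in> ball1 \<and> g (snd u) > 1 - \<delta>}"
    and "is_slice1 {u::'a::real_normed_vector \<times> 'b. u \<in> ball1 \<and> - g (snd u) > 1 - \<delta>}"
proof -
  have bl: "bounded_linear (\<lambda>u::'a \<times> 'b. g (snd u))"
    using bounded_linear_compose[OF assms(1) bounded_linear_snd] by (simp add: o_def)
  note dn = dnorm1_comp_snd[OF assms(1-4)]
  have "(0, y0) \<in> {u::'a \<times> 'b. u \<in> ball1 \<and> g (snd u) > 1 - \<delta>}"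
    using assms(3-5) by (simp add: ball1_def norm1_def)
  then show "is_slice1 {u::'a \<times> 'b. u \<in> ball1 \<and> g (snd u) > 1 - \<delta>}"
    unfolding is_slice1_def using bl assms(5)
    by (intro exI[of _ "\<lambda>u. g (snd u)"] exI[of _ \<delta>]) (auto simp: dn)
  have "g (- y0) = -1" using assms(1,3) by (simp add: linear_simps)
  then have "(0, - y0) \<in> {u::'a \<times> 'b. u \<in> ball1 \<and> - g (snd u) > 1 - \<delta>}"
    using assms(4,5) by (simp add: ball1_def norm1_def)
  then show "is_slice1 {u::'a \<times> 'b. u \<in> ball1 \<and> - g (snd u) > 1 - \<delta>}"
    unfolding is_slice1_def using bounded_linear_minus[OF bl] assms(5)
    by (intro exI[of _ "\<lambda>u. - g (snd u)"] exI[of _ \<delta>])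
      (auto simp: dnorm1_uminus[of "\<lambda>u. g (snd u)"] dn)
qed

lemma ccs1_containing_0_in_small_ball:
  fixes y0 :: "'b::real_normed_vector"
  assumes "strongly_exposed y0" and "\<epsilon> > 0"
  shows "\<exists>C::('a::real_normed_vector \<times> 'b) set. is_ccs1 C \<and> 0 \<in> C \<and> (\<forall>w\<in>C. norm1 w \<le> 2 * \<epsilon>)"
proof -
  obtain g :: "'b \<Rightarrow> real" where bl: "bounded_linear g" and og: "onorm g = 1" and gy: "g y0 = 1" and ny: "norm y0 \<le> 1"
    and unif: "\<And>e. e > 0 \<Longrightarrow> \<exists>d>0. \<forall>y. norm y \<le> 1 \<longrightarrow> g y > 1 - d \<longrightarrow> norm (y - y0) < e"
    using strongly_exposed_uniform[OF assms(1)] by blast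
  obtain d1 where "d1 > 0" and d1: "\<And>y. norm y \<le> 1 \<Longrightarrow> g y > 1 - d1 \<Longrightarrow> norm (y - y0) < \<epsilon>"
    using unif[OF assms(2)] by blast
  define \<delta> where "\<delta> = min d1 \<epsilon>"
  have \<delta>: "\<delta> > 0" "\<delta> \<le> \<epsilon>" "\<delta> \<le> d1" using \<open>d1 > 0\<close> assms(2) by (auto simp: \<delta>_def)
  have g_uminus: "g (- y) = - g y" for y using bl by (simp add: linear_simps)
  define S where "S = {u::'a \<times> 'b. u \<in> ball1 \<and> g (snd u) > 1 - \<delta>}"
  define T where "T = {u::'a \<times> 'b. u \<in> ball1 \<and> - g (snd u) > 1 - \<delta>}"
  define C where "C = {(1/2::real) *\<^sub>R a + (1/2) *\<^sub>R b | a b. a \<in> S \<and> b \<in> T}"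
  have near: "norm x < \<delta> \<and> norm (y - y0) < \<epsilon>" if "norm x + norm y \<le> 1" "g y > 1 - \<delta>"
    for x :: 'a and y
  proof
    have "g y \<le> norm y" using abs_le_norm_if_onorm_eq_1[OF bl og, of y] by simp
    then show "norm x < \<delta>" using that by linarith
    show "norm (y - y0) < \<epsilon>" using that \<delta>(3) norm_ge_zero[of x] by (intro d1) linarith+
  qed
  have "norm1 w \<le> 2 * \<epsilon>" if "w \<in> C" for w
  proof -
    obtain a b where ab: "a \<in> S" "b \<in> T" "w = (1/2::real) *\<^sub>R a + (1/2) *\<^sub>R b"
      using \<open>w \<in> C\<close> unfolding C_def by blast
    have "norm (fst a) < \<delta> \<and> norm (snd a - y0) < \<epsilon>"
      using near[of "fst a" "snd a"] ab(1) by (simp add: S_def ball1_def norm1_def)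
    moreover have "norm (fst b) < \<delta> \<and> norm (- snd b - y0) < \<epsilon>"
      using near[of "fst b" "- snd b"] ab(2) by (simp add: T_def ball1_def norm1_def g_uminus)
    moreover have "norm (- snd b - y0) = norm (snd b + y0)"
      using norm_minus_cancel[of "snd b + y0"] by simp
    ultimately show ?thesis
      using norm1_midpoint_le[of a b y0] \<delta> unfolding ab(3) by argo
  qed
  moreover have "0 \<in> C"
  proof -
    have "(0, y0) \<in> S" "(0, - y0) \<in> T" using \<delta> gy ny g_uminus by (simp_all add: S_def T_def ball1_def norm1_def)
    moreover have "(0::'a \<times> 'b) = (1/2::real) *\<^sub>R (0, y0) + (1/2) *\<^sub>R (0, - y0)" by (simp add: zero_prod_def)
    ultimately show ?thesis unfolding C_def by blast
  qed
  moreover have "is_ccs1 C"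
    unfolding C_def S_def T_def
    by (intro is_ccs1_midpoints is_slice1_comp_snd[OF bl og gy ny \<delta>(1)])
  ultimately show ?thesis by blast
qed

lemma not_ccs_daugavet_point1_if_small_ccs:
  fixes C :: "('a::real_normed_vector \<times> 'b::real_normed_vector) set" and u :: "'a \<times> 'b"
  assumes "is_ccs1 C" and "0 \<in> C" and "\<And>w. w \<in> C \<Longrightarrow> norm1 w \<le> r" and "r < 1"
  shows "\<not> ccs_daugavet_point1 u"
proof
  assume "ccs_daugavet_point1 u"
  then have u: "norm1 u = 1" "(SUP v\<in>C. norm1 (u - v)) = 2"
    using assms(1) unfolding ccs_daugavet_point1_def by auto
  have "(SUP v\<in>C. norm1 (u - v)) \<le> 1 + r"
  proof (rule cSUP_least)
    show "C \<noteq> {}" using assms(2) by blast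
    show "norm1 (u - v) \<le> 1 + r" if "v \<in> C" for v
      using norm1_diff_le[of u v] assms(3)[OF that] u(1) by linarith
  qed
  then show False using u(2) assms(4) by simp
qed

lemma not_SD2P1_if_small_ccs:
  fixes C :: "('a::real_normed_vector \<times> 'b::real_normed_vector) set"
  assumes "is_ccs1 C" and "0 \<in> C" and "\<And>w. w \<in> C \<Longrightarrow> norm1 w \<le> r" and "r < 1"
  shows "\<not> SD2P1 TYPE('a \<times> 'b)"
proof
  assume "SD2P1 TYPE('a \<times> 'b)"
  then have "diam1 C = 2" using assms(1) unfolding SD2P1_def by blast
  moreover have "diam1 C \<le> 2 * r"
    unfolding diam1_def
  proof (rule cSUP_least)
    show "C \<times> C \<noteq> {}" using assms(2) by blast
    show "norm1 (fst p - snd p) \<le> 2 * r" if "p \<in> C \<times> C" for p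
      using that by (intro norm1_diff_le_if_radius[OF assms(3)]) (auto simp: mem_Times_iff)
  qed
  ultimately show False using assms(4) by simp
qed

theorem mainTheorem8:
  fixes y0 :: "'b::banach"
  assumes "norm y0 = 1" and "strongly_exposed y0"
  shows "(\<forall>\<epsilon>>0. \<exists>C::('a::banach \<times> 'b) set. is_ccs1 C \<and> 0 \<in> C \<and>
            (\<forall>u\<in>C. \<forall>v\<in>C. norm1 (u - v) \<le> 4 * \<epsilon>))
         \<and> (\<forall>u::'a \<times> 'b. \<not> ccs_daugavet_point1 u)
         \<and> \<not> SD2P1 TYPE('a \<times> 'b)"
proof (intro conjI allI impI)
  fix \<epsilon> :: real assume "\<epsilon> > 0"
  then obtain C :: "('a \<times> 'b) set" where C: "is_ccs1 C" "0 \<in> C" "\<And>w. w \<in> C \<Longrightarrow> norm1 w \<le> 2 * \<epsilon>"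
    using ccs1_containing_0_in_small_ball[OF assms(2)] by blast
  then have "\<forall>u\<in>C. \<forall>v\<in>C. norm1 (u - v) \<le> 4 * \<epsilon>"
    using norm1_diff_le_if_radius[OF C(3)] by simp
  with C(1,2) show "\<exists>C::('a \<times> 'b) set. is_ccs1 C \<and> 0 \<in> C \<and> (\<forall>u\<in>C. \<forall>v\<in>C. norm1 (u - v) \<le> 4 * \<epsilon>)"
    by blast
next
  obtain C :: "('a \<times> 'b) set" where C: "is_ccs1 C" "0 \<in> C" "\<And>w. w \<in> C \<Longrightarrow> norm1 w \<le> 1/2"
    using ccs1_containing_0_in_small_ball[OF assms(2), of "1/4"] by auto
  show "\<not> ccs_daugavet_point1 u" for u :: "'a \<times> 'b"
    using not_ccs_daugavet_point1_if_small_ccs[OF C] by simp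
  show "\<not> SD2P1 TYPE('a \<times> 'b)"
    using not_SD2P1_if_small_ccs[OF C] by simp
qed

end
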